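(* Let $n\ge 2$ and let $H=\langle h\rangle$ be a cyclic group of order $n$. Let $G=H\times H$, and regard the first factor $H\times\{e\}$ as "$H$" and the second factor $\{e\}\times H$ as "$P$" (so $P=\langle g\rangle$ with $g=(e,h)$ and $m=n$). Let $a,b\in\{0,1,\dots,n-1\}$ and put $\ell=|a-b|$. Define $$R=\{(h^a,x): x\in H,\ x\neq h^b\}\ \cup\ \{(x,h^b): x\in H,\ x\neq h^b\}\subseteq G .$$ If $\ell\neq 0$, then $R$ is an $\ell$-$(n,n,2n-2,n-2,n,n-2,2,1)$-partial direct product difference set in $G$ relative to the two factors. If $\ell=0$, then $R$ is an $(n,n,2n-2,n-2,n-2,2)$-direct product difference set in $G$ relative to the two factors.
   Context: Group ring notation: for a finite group $G$ and a subset $X\subseteq G$, write $X$ also for the element $\sum_{x\in X}x$ of the integral group ring $\mathbb Z[G]$, and $X^{(-1)}=\sum_{x\in X}x^{-1}$. Let $G=H\times P$ with $H=\langle h\rangle$ cyclic of order $n$ and $P=\langle g\rangle$ cyclic of order $m$, identifying $H$ with $H\times\{e_P\}$ and $P$ with $\{e_H\}\times P$; let $e$ be the identity of $G$. (1) Partial direct product difference set (PDPDS): let $\ell$ be an integer with $h^\ell\neq e_H$. A subset $R\subseteq G$ with $|R|=k$ is an $\ell$-$(n,m,k,\lambda_1,\lambda_2,\lambda_3,\mu_1,\mu_2)$-PDPDS in $G$ relative to $H$ and $P$ if in $\mathbb Z[G]$ $$RR^{(-1)}=(k-\lambda_1-\lambda_2+\mu_1)e+(\lambda_1-\mu_1)H+(\lambda_2-\mu_1)P+\mu_1G+(\lambda_3-\lambda_1)(h^\ell+h^{n-\ell})+(\mu_2-\mu_1)(h^\ell+h^{n-\ell})(g+g^2+\dots+g^{m-1}).$$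 (When $h^\ell\ne h^{n-\ell}$ this says: the quotients $r_1r_2^{-1}$, $r_1\neq r_2\in R$, represent every element of $H\setminus\{h^\ell,h^{n-\ell},e_H\}$ exactly $\lambda_1$ times, every non-identity element of $P$ exactly $\lambda_2$ times, each of $h^\ell,h^{n-\ell}$ exactly $\lambda_3$ times, every element of $(H\setminus\{h^\ell,h^{n-\ell},e_H\})\times(P\setminus\{e_P\})$ exactly $\mu_1$ times, and every element of $\{h^\ell,h^{n-\ell}\}\times(P\setminus\{e_P\})$ exactly $\mu_2$ times.) (2) Direct product difference set (DPDS): a subset $R\subseteq G$ with $|R|=k$ is an $(n,m,k,\lambda_1,\lambda_2,\mu)$-DPDS in $G$ relative to $H$ and $P$ if the quotients $r_1r_2^{-1}$, $r_1\ne r_2\in R$, represent every non-identity element of $H$ exactly $\lambda_1$ times, every non-identity element of $P$ exactly $\lambda_2$ times, and every element of $(H\setminus\{e_H\})\times(P\setminus\{e_P\})$ exactly $\mu$ times (and no other elements). *)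

theory Defs
  imports Main
begin

text \<open>Model: H = <h> cyclic of order n is represented by the residues {0..<n}
  under addition mod n (h^i corresponds to i mod n); P = <g> cyclic of order m
  by {0..<m}.  G = H x P is {0..<n} x {0..<m}, H is identified with the
  elements (i,0), P with the elements (0,j), identity e = (0,0).\<close>

definition grp :: "nat \<Rightarrow> nat \<Rightarrow> (nat \<times> nat) set" where
  "grp n m = {0..<n} \<times> {0..<m}"

definition quot :: "nat \<Rightarrow> nat \<Rightarrow> nat \<times> nat \<Rightarrow> nat \<times> nat \<Rightarrow> nat \<times> nat" where
  "quot n m r1 r2 = ((fst r1 + n - fst r2) mod n, (snd r1 + m - snd r2) mod m)"

text \<open>Coefficient of z in the group ring element R R^(-1).\<close>
definition coeff_RRinv :: "nat \<Rightarrow> nat \<Rightarrow> (nat \<times> nat) set \<Rightarrow> nat \<times> nat \<Rightarrow> nat" where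
  "coeff_RRinv n m R z = card {(r1, r2). r1 \<in> R \<and> r2 \<in> R \<and> quot n m r1 r2 = z}"

definition diff_count :: "nat \<Rightarrow> nat \<Rightarrow> (nat \<times> nat) set \<Rightarrow> nat \<times> nat \<Rightarrow> nat" where
  "diff_count n m R z = card {(r1, r2). r1 \<in> R \<and> r2 \<in> R \<and> r1 \<noteq> r2 \<and> quot n m r1 r2 = z}"

definition ind :: "bool \<Rightarrow> int" where
  "ind P = (if P then 1 else 0)"

text \<open>Coefficient at z = (i,j) of the right-hand side
  (k-l1-l2+mu1)e + (l1-mu1)H + (l2-mu1)P + mu1 G + (l3-l1)(h^l + h^(n-l))
   + (mu2-mu1)(h^l + h^(n-l))(g + g^2 + ... + g^(m-1)).\<close>
definition pdpds_rhs ::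
  "nat \<Rightarrow> nat \<Rightarrow> int \<Rightarrow> int \<Rightarrow> int \<Rightarrow> int \<Rightarrow> int \<Rightarrow> int \<Rightarrow> int \<Rightarrow> nat \<times> nat \<Rightarrow> int" where
  "pdpds_rhs n m l k l1 l2 l3 mu1 mu2 z =
     (k - l1 - l2 + mu1) * ind (z = (0, 0))
     + (l1 - mu1) * ind (snd z = 0)
     + (l2 - mu1) * ind (fst z = 0)
     + mu1
     + (l3 - l1) * (ind (z = (nat (l mod int n), 0)) + ind (z = (nat ((int n - l) mod int n), 0)))
     + (mu2 - mu1) * ((ind (fst z = nat (l mod int n)) + ind (fst z = nat ((int n - l) mod int n)))
                       * ind (snd z \<noteq> 0))"

text \<open>l-(n,m,k,l1,l2,l3,mu1,mu2)-PDPDS in G = H x P (group ring identity,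
  compared coefficientwise on all of G).\<close>
definition is_PDPDS ::
  "int \<Rightarrow> nat \<Rightarrow> nat \<Rightarrow> nat \<Rightarrow> int \<Rightarrow> int \<Rightarrow> int \<Rightarrow> int \<Rightarrow> int \<Rightarrow> (nat \<times> nat) set \<Rightarrow> bool" where
  "is_PDPDS l n m k l1 l2 l3 mu1 mu2 R \<longleftrightarrow>
     l mod int n \<noteq> 0 \<and> R \<subseteq> grp n m \<and> card R = k \<and>
     (\<forall>z \<in> grp n m. int (coeff_RRinv n m R z) = pdpds_rhs n m l (int k) l1 l2 l3 mu1 mu2 z)"

definition is_DPDS ::
  "nat \<Rightarrow> nat \<Rightarrow> nat \<Rightarrow> nat \<Rightarrow> nat \<Rightarrow> nat \<Rightarrow> (nat \<times> nat) set \<Rightarrow> bool" where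
  "is_DPDS n m k l1 l2 mu R \<longleftrightarrow>
     R \<subseteq> grp n m \<and> card R = k \<and>
     (\<forall>z \<in> grp n m. diff_count n m R z =
        (if z = (0, 0) then 0
         else if snd z = 0 then l1
         else if fst z = 0 then l2
         else mu))"

end

theory Submission
  imports Defs
begin

(* The coefficient of z in R R^(-1) counts the r \<in> R with z + r \<in> R.  R is the disjoint union of the
   punctured lines V = {a} x (H - {b}) and W = (H - {b}) x {b}.  For z = (i, j), the translate z + V
   meets V in n - 1 - [j \<noteq> 0] points if i = 0 and nowhere otherwise, and meets W in one point if
   j \<noteq> 0, unless that point is the missing (b, b), i.e. unless i = b - a; symmetrically z + W meets
   W only for j = 0 and meets V once for j \<noteq> 0 unless i = a - b.  These two exceptional values of i
   are the exponents l and n - l. *)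

definition grp_add :: "nat \<Rightarrow> nat \<Rightarrow> nat \<times> nat \<Rightarrow> nat \<times> nat \<Rightarrow> nat \<times> nat" where
  "grp_add n m z r = ((fst z + fst r) mod n, (snd z + snd r) mod m)"

lemma sub_mod_eq_iff:
  fixes n x y c :: nat
  assumes "x < n" "y < n" "c < n"
  shows "(x + n - y) mod n = c \<longleftrightarrow> x = (c + y) mod n"
  using assms by (auto simp: mod_if)

lemma sub_mod_eq_iff_swap:
  fixes n x y c :: nat
  assumes "x < n" "y < n" "c < n"
  shows "(x + n - y) mod n = c \<longleftrightarrow> y = (x + n - c) mod n"
  using assms by (auto simp: mod_if)

lemma add_mod_eq_iff:
  fixes n t x c :: nat
  assumes "t < n" "x < n" "c < n"
  shows "(t + x) mod n = c \<longleftrightarrow> x = (c + n - t) mod n"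
  using assms by (auto simp: mod_if)

lemma add_mod_eq_self_iff:
  fixes n i x :: nat
  assumes "i < n" "x < n"
  shows "(i + x) mod n = x \<longleftrightarrow> i = 0"
  using assms by (auto simp: mod_if)

lemma quot_eq_iff_grp_add:
  assumes "r1 \<in> grp n m" "r2 \<in> grp n m" "z \<in> grp n m"
  shows "quot n m r1 r2 = z \<longleftrightarrow> r1 = grp_add n m z r2"
proof -
  obtain x1 y1 x2 y2 i j where r: "r1 = (x1, y1)" "r2 = (x2, y2)" "z = (i, j)"
    by (cases r1; cases r2; cases z) auto
  then have "x1 < n" "x2 < n" "i < n" "y1 < m" "y2 < m" "j < m"
    using assms by (auto simp: grp_def)
  then show ?thesis
    using r sub_mod_eq_iff[of x1 n x2 i] sub_mod_eq_iff[of y1 m y2 j]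
    by (simp add: quot_def grp_add_def)
qed

lemma quot_self: "quot n m r r = (0, 0)"
  by (simp add: quot_def)

lemma quot_eq_zero_iff:
  assumes "r1 \<in> grp n m" "r2 \<in> grp n m"
  shows "quot n m r1 r2 = (0, 0) \<longleftrightarrow> r1 = r2"
proof -
  have "(0, 0) \<in> grp n m"
    using assms by (auto simp: grp_def)
  moreover have "grp_add n m (0, 0) r2 = r2"
    using assms(2) by (auto simp: grp_add_def grp_def)
  ultimately show ?thesis
    using quot_eq_iff_grp_add[OF assms] by simp
qed

lemma card_pairs_graph:
  assumes "\<And>r1 r2. r1 \<in> R \<Longrightarrow> r2 \<in> R \<Longrightarrow> Q r1 r2 \<longleftrightarrow> r1 = f r2"
  shows "card {(r1, r2). r1 \<in> R \<and> r2 \<in> R \<and> Q r1 r2} = card {r \<in> R. f r \<in> R}"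
proof -
  have "{(r1, r2). r1 \<in> R \<and> r2 \<in> R \<and> Q r1 r2} = (\<lambda>r. (f r, r)) ` {r \<in> R. f r \<in> R}"
    using assms by auto
  moreover have "inj_on (\<lambda>r. (f r, r)) X" for X
    by (auto simp: inj_on_def)
  ultimately show ?thesis
    by (simp add: card_image)
qed

lemma coeff_RRinv_eq_card_translates:
  assumes "R \<subseteq> grp n m" "z \<in> grp n m"
  shows "coeff_RRinv n m R z = card {r \<in> R. grp_add n m z r \<in> R}"
  unfolding coeff_RRinv_def
  by (rule card_pairs_graph) (use assms quot_eq_iff_grp_add in blast)

lemma diff_count_zero:
  assumes "R \<subseteq> grp n m"
  shows "diff_count n m R (0, 0) = 0"
proof -
  have "{(r1, r2). r1 \<in> R \<and> r2 \<in> R \<and> r1 \<noteq> r2 \<and> quot n m r1 r2 = (0, 0)} = {}"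
    using assms quot_eq_zero_iff by fast
  then show ?thesis
    unfolding diff_count_def by (metis card.empty)
qed

lemma diff_count_eq_coeff_RRinv:
  assumes "z \<noteq> (0, 0)"
  shows "diff_count n m R z = coeff_RRinv n m R z"
  unfolding diff_count_def coeff_RRinv_def using assms quot_self[of n m] by metis

lemma card_guarded_disj:
  assumes "finite S" "\<And>x. Q1 \<Longrightarrow> Q2 \<Longrightarrow> f x \<Longrightarrow> g x \<Longrightarrow> False"
  shows "card {x \<in> S. (Q1 \<and> f x) \<or> (Q2 \<and> g x)} =
    (if Q1 then card {x \<in> S. f x} else 0) + (if Q2 then card {x \<in> S. g x} else 0)"
proof -
  have "{x \<in> S. (Q1 \<and> f x) \<or> (Q2 \<and> g x)} = {x \<in> S. Q1 \<and> f x} \<union> {x \<in> S. Q2 \<and> g x}"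
    by auto
  also have "card \<dots> = card {x \<in> S. Q1 \<and> f x} + card {x \<in> S. Q2 \<and> g x}"
    by (rule card_Un_disjoint) (use assms in auto)
  finally show ?thesis
    by simp
qed

lemma card_add_mod_eq:
  fixes n b t c :: nat
  assumes "b < n" "t < n" "c < n"
  shows "card {x \<in> {0..<n} - {b}. (t + x) mod n = c} = (if (c + n - t) mod n = b then 0 else 1)"
proof -
  have "{x \<in> {0..<n} - {b}. (t + x) mod n = c} = {(c + n - t) mod n} - {b}"
    using assms add_mod_eq_iff[of t n _ c] by auto
  then show ?thesis
    by simp
qed

lemma card_add_mod_neq:
  fixes n b t c :: nat
  assumes "b < n" "t < n" "c < n"
  shows "card {x \<in> {0..<n} - {b}. (t + x) mod n \<noteq> c}
    = n - 1 - (if (c + n - t) mod n = b then 0 else 1)"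
proof -
  let ?S = "{0..<n} - {b}"
  have "card {x \<in> ?S. (t + x) mod n \<noteq> c} = card (?S - {x \<in> ?S. (t + x) mod n = c})"
    by (rule arg_cong[where f = card]) auto
  also have "\<dots> = card ?S - card {x \<in> ?S. (t + x) mod n = c}"
    by (rule card_Diff_subset) auto
  finally show ?thesis
    using card_add_mod_eq[OF assms] assms by simp
qed

definition cross_set :: "nat \<Rightarrow> nat \<Rightarrow> nat \<Rightarrow> (nat \<times> nat) set" where
  "cross_set n a b = {(a, x) | x. x < n \<and> x \<noteq> b} \<union> {(x, b) | x. x < n \<and> x \<noteq> b}"

lemma mem_cross_set:
  "(p, q) \<in> cross_set n a b \<longleftrightarrow> (p = a \<and> q < n \<and> q \<noteq> b) \<or> (q = b \<and> p < n \<and> p \<noteq> b)"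
  unfolding cross_set_def by blast

lemma cross_set_eq:
  "cross_set n a b = Pair a ` ({0..<n} - {b}) \<union> (\<lambda>x. (x, b)) ` ({0..<n} - {b})"
  unfolding cross_set_def by auto

lemma cross_set_subset_grp: "a < n \<Longrightarrow> b < n \<Longrightarrow> cross_set n a b \<subseteq> grp n n"
  unfolding cross_set_eq grp_def by auto

lemma card_filter_two_lines:
  assumes "finite S" "b \<notin> S"
  shows "card {r \<in> Pair a ` S \<union> (\<lambda>x. (x, b)) ` S. P r}
    = card {x \<in> S. P (a, x)} + card {x \<in> S. P (x, b)}"
proof -
  have "{r \<in> Pair a ` S \<union> (\<lambda>x. (x, b)) ` S. P r}
      = Pair a ` {x \<in> S. P (a, x)} \<union> (\<lambda>x. (x, b)) ` {x \<in> S. P (x, b)}"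
    by auto
  also have "card \<dots>
      = card (Pair a ` {x \<in> S. P (a, x)}) + card ((\<lambda>x. (x, b)) ` {x \<in> S. P (x, b)})"
    by (rule card_Un_disjoint) (use assms in auto)
  also have "\<dots> = card {x \<in> S. P (a, x)} + card {x \<in> S. P (x, b)}"
    by (simp add: card_image inj_on_def)
  finally show ?thesis .
qed

lemma card_cross_set_filter:
  "card {r \<in> cross_set n a b. P r}
    = card {x \<in> {0..<n} - {b}. P (a, x)} + card {x \<in> {0..<n} - {b}. P (x, b)}"
  unfolding cross_set_eq by (rule card_filter_two_lines) auto

lemma card_translates_vertical:
  assumes "a < n" "b < n" "i < n" "j < n"
  shows "card {x \<in> {0..<n} - {b}. grp_add n n (i, j) (a, x) \<in> cross_set n a b}
    = (if i = 0 then n - 1 - (if j = 0 then 0 else 1) else 0)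
      + (if j \<noteq> 0 \<and> i \<noteq> (b + n - a) mod n then 1 else 0)"
proof -
  let ?S = "{0..<n} - {b}"
  have "grp_add n n (i, j) (a, x) \<in> cross_set n a b
      \<longleftrightarrow> (i = 0 \<and> (j + x) mod n \<noteq> b) \<or> ((i + a) mod n \<noteq> b \<and> (j + x) mod n = b)" for x
    unfolding grp_add_def mem_cross_set fst_conv snd_conv
    using add_mod_eq_self_iff[OF \<open>i < n\<close> \<open>a < n\<close>] \<open>a < n\<close> by auto
  then have "card {x \<in> ?S. grp_add n n (i, j) (a, x) \<in> cross_set n a b}
      = (if i = 0 then card {x \<in> ?S. (j + x) mod n \<noteq> b} else 0)
        + (if (i + a) mod n \<noteq> b then card {x \<in> ?S. (j + x) mod n = b} else 0)"
    by (simp only:) (rule card_guarded_disj, auto)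
  also have "card {x \<in> ?S. (j + x) mod n \<noteq> b} = n - 1 - (if j = 0 then 0 else 1)"
    using card_add_mod_neq[of b n j b] sub_mod_eq_iff_swap[of b n j b] assms by simp
  also have "card {x \<in> ?S. (j + x) mod n = b} = (if j = 0 then 0 else 1)"
    using card_add_mod_eq[of b n j b] sub_mod_eq_iff_swap[of b n j b] assms by simp
  also have "(i + a) mod n \<noteq> b \<longleftrightarrow> i \<noteq> (b + n - a) mod n"
    using add_mod_eq_iff[of a n i b] assms by (simp add: add.commute)
  finally show ?thesis
    by simp
qed

lemma card_translates_horizontal:
  assumes "a < n" "b < n" "i < n" "j < n"
  shows "card {x \<in> {0..<n} - {b}. grp_add n n (i, j) (x, b) \<in> cross_set n a b}
    = (if j \<noteq> 0 \<and> i \<noteq> (a + n - b) mod n then 1 else 0)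
      + (if j = 0 then n - 1 - (if i = 0 then 0 else 1) else 0)"
proof -
  let ?S = "{0..<n} - {b}"
  have "grp_add n n (i, j) (x, b) \<in> cross_set n a b
      \<longleftrightarrow> (j \<noteq> 0 \<and> (i + x) mod n = a) \<or> (j = 0 \<and> (i + x) mod n \<noteq> b)" for x
    unfolding grp_add_def mem_cross_set fst_conv snd_conv
    using add_mod_eq_self_iff[OF \<open>j < n\<close> \<open>b < n\<close>] \<open>b < n\<close> by auto
  then have "card {x \<in> ?S. grp_add n n (i, j) (x, b) \<in> cross_set n a b}
      = (if j \<noteq> 0 then card {x \<in> ?S. (i + x) mod n = a} else 0)
        + (if j = 0 then card {x \<in> ?S. (i + x) mod n \<noteq> b} else 0)"
    by (simp only:) (rule card_guarded_disj, auto)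
  also have "card {x \<in> ?S. (i + x) mod n = a} = (if i = (a + n - b) mod n then 0 else 1)"
    using card_add_mod_eq[of b n i a] sub_mod_eq_iff_swap[of a n i b] assms by simp
  also have "card {x \<in> ?S. (i + x) mod n \<noteq> b} = n - 1 - (if i = 0 then 0 else 1)"
    using card_add_mod_neq[of b n i b] sub_mod_eq_iff_swap[of b n i b] assms by simp
  finally show ?thesis
    by simp
qed

lemma card_translates_cross_set:
  assumes "a < n" "b < n" "i < n" "j < n"
  shows "card {r \<in> cross_set n a b. grp_add n n (i, j) r \<in> cross_set n a b}
    = (if i = 0 then n - 1 - (if j = 0 then 0 else 1) else 0)
      + (if j \<noteq> 0 \<and> i \<noteq> (b + n - a) mod n then 1 else 0)
      + (if j \<noteq> 0 \<and> i \<noteq> (a + n - b) mod n then 1 else 0)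
      + (if j = 0 then n - 1 - (if i = 0 then 0 else 1) else 0)"
  unfolding card_cross_set_filter card_translates_vertical[OF assms]
    card_translates_horizontal[OF assms]
  by simp

lemma card_cross_set:
  assumes "b < n"
  shows "card (cross_set n a b) = 2 * n - 2"
proof -
  have "card (cross_set n a b)
      = card (Pair a ` ({0..<n} - {b})) + card ((\<lambda>x. (x, b)) ` ({0..<n} - {b}))"
    unfolding cross_set_eq by (rule card_Un_disjoint) auto
  then show ?thesis
    using assms by (simp add: card_image inj_on_def)
qed

lemma residues_abs_diff:
  fixes a b n :: nat
  assumes "a < n" "b < n"
  shows "{(b + n - a) mod n, (a + n - b) mod n}
    = {nat (\<bar>int a - int b\<bar> mod int n), nat ((int n - \<bar>int a - int b\<bar>) mod int n)}"
proof -
  have int_mod: "nat (int k mod int n) = k mod n" for k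
    by (simp add: nat_mod_distrib)
  show ?thesis
  proof (cases "a \<le> b")
    case True
    then have "\<bar>int a - int b\<bar> = int (b - a)" "int n - \<bar>int a - int b\<bar> = int (n - (b - a))"
      using assms by auto
    moreover have "b + n - a = (b - a) + n" "a + n - b = n - (b - a)"
      using True assms by auto
    ultimately show ?thesis
      by (simp only: int_mod mod_add_self2)
  next
    case False
    then have "\<bar>int a - int b\<bar> = int (a - b)" "int n - \<bar>int a - int b\<bar> = int (n - (a - b))"
      using assms by auto
    moreover have "a + n - b = (a - b) + n" "b + n - a = n - (a - b)"
      using False assms by auto
    ultimately show ?thesis
      by (simp only: int_mod mod_add_self2 insert_commute)
  qed
qed

lemma is_PDPDS_cross_set:
  assumes "n \<ge> 2" "a < n" "b < n" "a \<noteq> b"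
  shows "is_PDPDS \<bar>int a - int b\<bar> n n (2 * n - 2) (int n - 2) (int n) (int n - 2) 2 1
    (cross_set n a b)"
proof -
  define l where "l = \<bar>int a - int b\<bar>"
  define L where "L = nat (l mod int n)"
  define L' where "L' = nat ((int n - l) mod int n)"
  define u where "u = (b + n - a) mod n"
  define v where "v = (a + n - b) mod n"
  have "0 < l" "l < int n"
    using assms unfolding l_def by auto
  have "u \<noteq> 0" "v \<noteq> 0"
    using assms sub_mod_eq_iff_swap[of b n a 0] sub_mod_eq_iff_swap[of a n b 0]
    unfolding u_def v_def by auto
  have uv: "u = L \<and> v = L' \<or> u = L' \<and> v = L"
    using residues_abs_diff[OF assms(2,3)] unfolding u_def v_def L_def L'_def l_def doubleton_eq_iff .
  show ?thesis
    unfolding is_PDPDS_def l_def[symmetric]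
  proof (intro conjI ballI)
    show "l mod int n \<noteq> 0"
      using \<open>0 < l\<close> \<open>l < int n\<close> by simp
    show "cross_set n a b \<subseteq> grp n n"
      by (rule cross_set_subset_grp[OF assms(2,3)])
    show "card (cross_set n a b) = 2 * n - 2"
      using assms(3) by (rule card_cross_set)
  next
    fix z assume z: "z \<in> grp n n"
    then obtain i j where ij: "z = (i, j)" "i < n" "j < n"
      by (auto simp: grp_def)
    then have "(i, j) \<in> grp n n"
      using z by simp
    have k: "int (2 * n - 2) = 2 * int n - 2"
      using assms(1) by simp
    show "int (coeff_RRinv n n (cross_set n a b) z)
        = pdpds_rhs n n l (int (2 * n - 2)) (int n - 2) (int n) (int n - 2) 2 1 z"
      unfolding ij(1)
        coeff_RRinv_eq_card_translates[OF cross_set_subset_grp[OF assms(2,3)] \<open>(i, j) \<in> grp n n\<close>]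
        card_translates_cross_set[OF assms(2,3) ij(2,3)] u_def[symmetric] v_def[symmetric]
        pdpds_rhs_def k L_def[symmetric] L'_def[symmetric] ind_def
      using uv \<open>u \<noteq> 0\<close> \<open>v \<noteq> 0\<close> assms(1) by (auto simp: of_nat_diff)
  qed
qed

lemma is_DPDS_cross_set:
  assumes "n \<ge> 2" "a < n"
  shows "is_DPDS n n (2 * n - 2) (n - 2) (n - 2) 2 (cross_set n a a)"
  unfolding is_DPDS_def
proof (intro conjI ballI)
  show "cross_set n a a \<subseteq> grp n n"
    using cross_set_subset_grp[OF assms(2,2)] .
  show "card (cross_set n a a) = 2 * n - 2"
    using assms(2) by (rule card_cross_set)
next
  fix z assume z: "z \<in> grp n n"
  then obtain i j where "z = (i, j)" "i < n" "j < n"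
    by (auto simp: grp_def)
  then show "diff_count n n (cross_set n a a) z = (if z = (0, 0) then 0
      else if snd z = 0 then n - 2 else if fst z = 0 then n - 2 else 2)"
    using diff_count_zero[OF cross_set_subset_grp[OF assms(2,2)]]
      diff_count_eq_coeff_RRinv[of z n n "cross_set n a a"]
      coeff_RRinv_eq_card_translates[OF cross_set_subset_grp[OF assms(2,2)] z]
      card_translates_cross_set[OF assms(2,2), of i j] assms(1)
    by auto
qed

theorem proposition1:
  fixes n a b :: nat and R :: "(nat \<times> nat) set"
  assumes "n \<ge> 2" and "a < n" and "b < n"
    and "R = {(a, x) | x. x < n \<and> x \<noteq> b} \<union> {(x, b) | x. x < n \<and> x \<noteq> b}"
  shows "(\<bar>int a - int b\<bar> \<noteq> 0 \<longrightarrow>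
           is_PDPDS \<bar>int a - int b\<bar> n n (2 * n - 2) (int n - 2) (int n) (int n - 2) 2 1 R)
       \<and> (\<bar>int a - int b\<bar> = 0 \<longrightarrow> is_DPDS n n (2 * n - 2) (n - 2) (n - 2) 2 R)"
proof -
  have R: "R = cross_set n a b"
    unfolding cross_set_def by (rule assms(4))
  show ?thesis
    using is_PDPDS_cross_set[OF assms(1-3)] is_DPDS_cross_set[OF assms(1,2)] R by auto
qed
end
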